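(* Let $G$ be a compact group with Haar probability measure $dg$, acting linearly and continuously on a finite-dimensional real vector space $V$. Fix $v\in V$ and a linear function $\ell:V\to\mathbb{R}$, let $f(g)=\ell(gv)$, and let $k$ be a positive integer. Then $$\|f\|_{2k}\le\|f\|_\infty\le \binom{\dim V+k-1}{k}^{1/(2k)}\|f\|_{2k}.$$
   Context: For $f:G\to\mathbb{R}$, $\|f\|_\infty=\max_{g\in G}|f(g)|$ and $\|f\|_{2k}=\left(\int_G f^{2k}(g)\,dg\right)^{1/(2k)}$. *)

theory Defs
  imports "HOL-Probability.Probability_Measure" "HOL-Algebra.Group"
begin

definition compact_group :: "('g::t2_space, 'b) monoid_scheme \<Rightarrow> bool" where
  "compact_group G \<longleftrightarrow> group G \<and> carrier G = UNIV \<and> compact (UNIV :: 'g set) \<and>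
     continuous_on UNIV (\<lambda>p::'g \<times> 'g. fst p \<otimes>\<^bsub>G\<^esub> snd p) \<and>
     continuous_on UNIV (\<lambda>x. inv\<^bsub>G\<^esub> x)"

definition haar_probability :: "('g::t2_space, 'b) monoid_scheme \<Rightarrow> 'g measure \<Rightarrow> bool" where
  "haar_probability G M \<longleftrightarrow> sets M = sets borel \<and> prob_space M \<and>
     (\<forall>g A. A \<in> sets borel \<longrightarrow> emeasure M ((\<lambda>x. g \<otimes>\<^bsub>G\<^esub> x) ` A) = emeasure M A)"

definition continuous_linear_action ::
    "('g::t2_space, 'b) monoid_scheme \<Rightarrow> ('g \<Rightarrow> 'v::euclidean_space \<Rightarrow> 'v) \<Rightarrow> bool" where
  "continuous_linear_action G act \<longleftrightarrow> (\<forall>g. linear (act g)) \<and> act \<one>\<^bsub>G\<^esub> = id \<and>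
     (\<forall>g h. act (g \<otimes>\<^bsub>G\<^esub> h) = act g \<circ> act h) \<and>
     continuous_on UNIV (\<lambda>p::'g \<times> 'v. act (fst p) (snd p))"

definition sup_norm :: "('g \<Rightarrow> real) \<Rightarrow> real" where
  "sup_norm f = (SUP g. \<bar>f g\<bar>)"

definition Lp_even_norm :: "'g measure \<Rightarrow> nat \<Rightarrow> ('g \<Rightarrow> real) \<Rightarrow> real" where
  "Lp_even_norm M k f = (integral\<^sup>L M (\<lambda>g. f g ^ (2 * k))) powr (1 / real (2 * k))"

end

theory Submission
  imports Defs
begin

text \<open>f = l(g v) is linear in the coordinates of g v, so f^k lies in the space W spanned by
  the degree-k monomials in these coordinates. W has dimension at most
  binomial (dim V + k - 1) k, and it is invariant under left translation because the coordinates
  of (h g) v are linear in those of g v. For an L2-orthonormal basis (e_j) of W, Cauchy-Schwarz in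
  the coefficients gives h(x)^2 <= K(x) * ||h||_2^2 for all h in W, where K = sum_j e_j^2. By
  Bessel's inequality K does not depend on the choice of orthonormal basis, so it is translation
  invariant, hence constant, and integrating shows K = dim W. Taking h = f^k yields
  |f(x)|^(2k) <= dim W * ||f||_(2k)^(2k).\<close>

definition fun_span :: "'i set \<Rightarrow> ('i \<Rightarrow> 'a \<Rightarrow> real) \<Rightarrow> ('a \<Rightarrow> real) set" where
  "fun_span I F = {f. \<exists>c. f = (\<lambda>x. \<Sum>i\<in>I. c i * F i x)}"

lemma fun_spanI: "(\<lambda>x. \<Sum>i\<in>I. c i * F i x) \<in> fun_span I F"
  unfolding fun_span_def by blast

lemma fun_spanE:
  assumes "f \<in> fun_span I F"
  obtains c where "f = (\<lambda>x. \<Sum>i\<in>I. c i * F i x)"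
  using assms unfolding fun_span_def by blast

lemma fun_span_add: "f \<in> fun_span I F \<Longrightarrow> g \<in> fun_span I F \<Longrightarrow> (\<lambda>x. f x + g x) \<in> fun_span I F"
proof -
  assume "f \<in> fun_span I F" "g \<in> fun_span I F"
  then obtain c d where "f = (\<lambda>x. \<Sum>i\<in>I. c i * F i x)" "g = (\<lambda>x. \<Sum>i\<in>I. d i * F i x)"
    by (elim fun_spanE)
  then show ?thesis
    using fun_spanI[where c = "\<lambda>i. c i + d i"] by (simp add: distrib_right sum.distrib)
qed

lemma fun_span_scale: "f \<in> fun_span I F \<Longrightarrow> (\<lambda>x. a * f x) \<in> fun_span I F"
  by (elim fun_spanE) (use fun_spanI[where c = "\<lambda>i. a * _ i"] in \<open>simp add: sum_distrib_left mult.assoc\<close>)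

lemma fun_span_sum:
  "finite A \<Longrightarrow> (\<And>a. a \<in> A \<Longrightarrow> g a \<in> fun_span I F) \<Longrightarrow> (\<lambda>x. \<Sum>a\<in>A. g a x) \<in> fun_span I F"
proof (induction A rule: finite_induct)
  case empty
  show ?case using fun_spanI[where c = "\<lambda>_. 0" and I = I and F = F] by simp
next
  case (insert a A)
  then show ?case using fun_span_add[of "g a" I F "\<lambda>x. \<Sum>a\<in>A. g a x"] by simp
qed

lemma fun_span_generator:
  assumes "finite I" "j \<in> I"
  shows "F j \<in> fun_span I F"
proof -
  have "(\<lambda>x. \<Sum>i\<in>I. (if i = j then 1 else 0) * F i x) = (\<lambda>x. \<Sum>i\<in>I. if i = j then F i x else 0)"
    by (intro ext sum.cong) auto
  also have "\<dots> = F j" using assms by simp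
  finally show ?thesis by (metis fun_spanI)
qed

lemma fun_span_subset:
  assumes "finite I" "\<And>i. i \<in> I \<Longrightarrow> F i \<in> fun_span J E"
  shows "fun_span I F \<subseteq> fun_span J E"
proof
  fix f assume "f \<in> fun_span I F"
  then obtain c where "f = (\<lambda>x. \<Sum>i\<in>I. c i * F i x)" by (rule fun_spanE)
  then show "f \<in> fun_span J E"
    using assms by (auto intro!: fun_span_sum fun_span_scale)
qed

lemma fun_span_mono: "finite I' \<Longrightarrow> I \<subseteq> I' \<Longrightarrow> fun_span I F \<subseteq> fun_span I' F"
  by (rule fun_span_subset) (auto intro: fun_span_generator rev_finite_subset)

lemma fun_span_cong: "(\<And>i. i \<in> I \<Longrightarrow> F i = F' i) \<Longrightarrow> fun_span I F = fun_span I F'"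
  unfolding fun_span_def by (auto cong: sum.cong)

lemma fun_span_comp_closed:
  assumes "finite I" "\<And>i. i \<in> I \<Longrightarrow> F i \<circ> h \<in> fun_span I F" "f \<in> fun_span I F"
  shows "f \<circ> h \<in> fun_span I F"
proof -
  obtain c where "f = (\<lambda>x. \<Sum>i\<in>I. c i * F i x)" using assms(3) by (rule fun_spanE)
  then have "f \<circ> h = (\<lambda>x. \<Sum>i\<in>I. c i * (F i \<circ> h) x)" by auto
  also have "\<dots> \<in> fun_span I F" using assms(1,2) by (intro fun_span_sum fun_span_scale)
  finally show ?thesis .
qed

subsection \<open>The L2 inner product of continuous functions on a compact space\<close>

locale compact_prob_space = prob_space M for M :: "'a::topological_space measure" +
  assumes sets_eq_borel: "sets M = sets borel"
    and compact_UNIV: "compact (UNIV :: 'a set)"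
begin

lemma space_eq_UNIV: "space M = UNIV"
  using sets_eq_imp_space_eq[OF sets_eq_borel] by simp

lemma borel_measurable_continuous: "continuous_on UNIV f \<Longrightarrow> (f :: 'a \<Rightarrow> real) \<in> borel_measurable M"
  using borel_measurable_continuous_onI measurable_cong_sets[OF sets_eq_borel refl] by blast

lemma bounded_continuous: "continuous_on UNIV (f :: 'a \<Rightarrow> real) \<Longrightarrow> \<exists>B. \<forall>x. \<bar>f x\<bar> \<le> B"
proof -
  assume "continuous_on UNIV f"
  then have "bounded (range f)" by (intro compact_imp_bounded compact_continuous_image compact_UNIV)
  then show ?thesis by (auto simp: bounded_iff)
qed

lemma integrable_continuous: "continuous_on UNIV (f :: 'a \<Rightarrow> real) \<Longrightarrow> integrable M f"
  using bounded_continuous borel_measurable_continuous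
  by (metis integrable_const_bound AE_I2 real_norm_def)

definition L2_inner :: "('a \<Rightarrow> real) \<Rightarrow> ('a \<Rightarrow> real) \<Rightarrow> real" where
  "L2_inner f g = (\<integral>x. f x * g x \<partial>M)"

lemma L2_inner_commute: "L2_inner f g = L2_inner g f"
  unfolding L2_inner_def by (simp add: mult.commute)

lemma L2_inner_self_nonneg: "0 \<le> L2_inner f f"
  unfolding L2_inner_def by simp

lemma L2_inner_scale_left: "L2_inner (\<lambda>x. a * f x) g = a * L2_inner f g"
  unfolding L2_inner_def by (simp add: mult.assoc)

lemma L2_inner_scale_right: "L2_inner f (\<lambda>x. a * g x) = a * L2_inner f g"
  unfolding L2_inner_def by (simp add: mult.left_commute)

lemma L2_inner_sum_left:
  assumes "\<And>i. i \<in> A \<Longrightarrow> continuous_on UNIV (f i)" "continuous_on UNIV g"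
  shows "L2_inner (\<lambda>x. \<Sum>i\<in>A. c i * f i x) g = (\<Sum>i\<in>A. c i * L2_inner (f i) g)"
proof -
  have "L2_inner (\<lambda>x. \<Sum>i\<in>A. c i * f i x) g = (\<integral>x. (\<Sum>i\<in>A. c i * (f i x * g x)) \<partial>M)"
    unfolding L2_inner_def by (simp add: sum_distrib_right mult.assoc)
  also have "\<dots> = (\<Sum>i\<in>A. c i * L2_inner (f i) g)"
    unfolding L2_inner_def using assms
    by (subst Bochner_Integration.integral_sum) (auto intro!: integrable_continuous continuous_intros)
  finally show ?thesis .
qed

lemma L2_inner_diff_left:
  assumes "continuous_on UNIV f" "continuous_on UNIV f'" "continuous_on UNIV g"
  shows "L2_inner (\<lambda>x. f x - f' x) g = L2_inner f g - L2_inner f' g"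
  unfolding L2_inner_def left_diff_distrib using assms
  by (intro Bochner_Integration.integral_diff) (auto intro!: integrable_continuous continuous_intros)

definition orthonormal_system :: "'i set \<Rightarrow> ('i \<Rightarrow> 'a \<Rightarrow> real) \<Rightarrow> bool" where
  "orthonormal_system J e \<longleftrightarrow> (\<forall>j\<in>J. continuous_on UNIV (e j)) \<and>
     (\<forall>j\<in>J. \<forall>j'\<in>J. L2_inner (e j) (e j') = (if j = j' then 1 else 0))"

lemma orthonormal_system_continuous: "orthonormal_system J e \<Longrightarrow> j \<in> J \<Longrightarrow> continuous_on UNIV (e j)"
  unfolding orthonormal_system_def by blast

lemma orthonormal_system_inner:
  "orthonormal_system J e \<Longrightarrow> j \<in> J \<Longrightarrow> j' \<in> J \<Longrightarrow> L2_inner (e j) (e j') = (if j = j' then 1 else 0)"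
  unfolding orthonormal_system_def by blast

lemma orthonormal_system_insert:
  assumes "orthonormal_system J e" "a \<notin> J" "continuous_on UNIV u" "L2_inner u u = 1"
    and "\<And>j. j \<in> J \<Longrightarrow> L2_inner u (e j) = 0"
  shows "orthonormal_system (insert a J) (e(a := u))"
proof -
  have "L2_inner (e j) u = 0" if "j \<in> J" for j
    using assms(5)[OF that] by (simp add: L2_inner_commute)
  then show ?thesis
    using assms unfolding orthonormal_system_def by auto
qed

lemma L2_inner_orthonormal_comb:
  assumes "orthonormal_system J e" "finite J" "m \<in> J"
  shows "L2_inner (\<lambda>x. \<Sum>j\<in>J. c j * e j x) (e m) = c m"
proof -
  have "L2_inner (\<lambda>x. \<Sum>j\<in>J. c j * e j x) (e m) = (\<Sum>j\<in>J. c j * L2_inner (e j) (e m))"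
    using assms by (intro L2_inner_sum_left) (auto intro: orthonormal_system_continuous)
  also have "\<dots> = (\<Sum>j\<in>J. if j = m then c j else 0)"
    using assms by (intro sum.cong) (auto simp: orthonormal_system_inner)
  also have "\<dots> = c m" using assms by simp
  finally show ?thesis .
qed

lemma L2_inner_self_orthonormal_comb:
  assumes "orthonormal_system J e" "finite J"
  shows "L2_inner (\<lambda>x. \<Sum>j\<in>J. c j * e j x) (\<lambda>x. \<Sum>j\<in>J. c j * e j x) = (\<Sum>j\<in>J. (c j)\<^sup>2)"
proof -
  have "L2_inner (\<lambda>x. \<Sum>j\<in>J. c j * e j x) (\<lambda>x. \<Sum>j\<in>J. c j * e j x)
     = (\<Sum>j\<in>J. c j * L2_inner (e j) (\<lambda>x. \<Sum>j\<in>J. c j * e j x))"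
    using assms by (intro L2_inner_sum_left) (auto intro!: continuous_intros intro: orthonormal_system_continuous)
  also have "\<dots> = (\<Sum>j\<in>J. (c j)\<^sup>2)"
    using assms by (intro sum.cong) (auto simp: L2_inner_commute[of "e _"] L2_inner_orthonormal_comb power2_eq_square)
  finally show ?thesis .
qed

definition orthonormal_residual :: "'i set \<Rightarrow> ('i \<Rightarrow> 'a \<Rightarrow> real) \<Rightarrow> ('a \<Rightarrow> real) \<Rightarrow> 'a \<Rightarrow> real" where
  "orthonormal_residual J e f x = f x - (\<Sum>j\<in>J. L2_inner f (e j) * e j x)"

lemma continuous_on_orthonormal_residual:
  "orthonormal_system J e \<Longrightarrow> continuous_on UNIV f \<Longrightarrow> continuous_on UNIV (orthonormal_residual J e f)"
  unfolding orthonormal_residual_def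
  by (auto intro!: continuous_intros intro: orthonormal_system_continuous)

lemma L2_inner_orthonormal_residual:
  assumes "orthonormal_system J e" "finite J" "continuous_on UNIV f" "m \<in> J"
  shows "L2_inner (orthonormal_residual J e f) (e m) = 0"
proof -
  have "L2_inner (orthonormal_residual J e f) (e m)
      = L2_inner f (e m) - L2_inner (\<lambda>x. \<Sum>j\<in>J. L2_inner f (e j) * e j x) (e m)"
    unfolding orthonormal_residual_def using assms
    by (intro L2_inner_diff_left) (auto intro!: continuous_intros intro: orthonormal_system_continuous)
  then show ?thesis using L2_inner_orthonormal_comb[OF assms(1,2,4)] by simp
qed

lemma orthonormal_system_insert_residual:
  assumes e: "orthonormal_system J e" "finite J" and "a \<notin> J" and f: "continuous_on UNIV f"
    and c: "c > 0" "c * c = L2_inner (orthonormal_residual J e f) (orthonormal_residual J e f)"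
  shows "orthonormal_system (insert a J) (e(a := (\<lambda>x. inverse c * orthonormal_residual J e f x)))"
proof (rule orthonormal_system_insert[OF e(1) \<open>a \<notin> J\<close>])
  let ?r = "orthonormal_residual J e f"
  show "continuous_on UNIV (\<lambda>x. inverse c * ?r x)"
    using continuous_on_orthonormal_residual[OF e(1) f] by (intro continuous_intros)
  have "L2_inner (\<lambda>x. inverse c * ?r x) (\<lambda>x. inverse c * ?r x) = inverse c * inverse c * (c * c)"
    unfolding L2_inner_scale_left L2_inner_scale_right c(2) by simp
  then show "L2_inner (\<lambda>x. inverse c * ?r x) (\<lambda>x. inverse c * ?r x) = 1"
    using c(1) by (simp add: field_simps)
  show "L2_inner (\<lambda>x. inverse c * ?r x) (e j) = 0" if "j \<in> J" for j
    using L2_inner_orthonormal_residual[OF e f that] unfolding L2_inner_scale_left by simp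
qed

lemma fun_span_insert_residual:
  fixes e :: "'i \<Rightarrow> 'a \<Rightarrow> real" and f :: "'a \<Rightarrow> real"
  assumes "finite J" "a \<notin> J" "c \<noteq> 0"
  defines "u \<equiv> (\<lambda>x. inverse c * orthonormal_residual J e f x)"
  shows "f \<in> fun_span (insert a J) (e(a := u))" and "u \<in> fun_span (insert a J) (e(a := f))"
proof -
  have "(\<Sum>j\<in>J. L2_inner f (e j) * (e(a := u)) j x) = (\<Sum>j\<in>J. L2_inner f (e j) * e j x)" for x
    using \<open>a \<notin> J\<close> by (intro sum.cong) auto
  then have "f = (\<lambda>x. c * (e(a := u)) a x + (\<Sum>j\<in>J. L2_inner f (e j) * (e(a := u)) j x))"
    using \<open>c \<noteq> 0\<close> by (simp add: fun_eq_iff u_def orthonormal_residual_def mult.assoc[symmetric])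
  also have "\<dots> \<in> fun_span (insert a J) (e(a := u))"
    using assms(1) by (intro fun_span_add fun_span_scale fun_span_sum fun_span_generator) auto
  finally show "f \<in> fun_span (insert a J) (e(a := u))" .
  have "(\<Sum>j\<in>J. (- inverse c * L2_inner f (e j)) * (e(a := f)) j x)
      = - inverse c * (\<Sum>j\<in>J. L2_inner f (e j) * e j x)" for x
  proof -
    have "(\<Sum>j\<in>J. (- inverse c * L2_inner f (e j)) * (e(a := f)) j x)
        = (\<Sum>j\<in>J. (- inverse c * L2_inner f (e j)) * e j x)"
      using \<open>a \<notin> J\<close> by (intro sum.cong) auto
    then show ?thesis by (simp add: sum_distrib_left mult.assoc)
  qed
  then have "u = (\<lambda>x. inverse c * (e(a := f)) a x +
                 (\<Sum>j\<in>J. (- inverse c * L2_inner f (e j)) * (e(a := f)) j x))"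
    by (simp add: fun_eq_iff u_def orthonormal_residual_def right_diff_distrib)
  also have "\<dots> \<in> fun_span (insert a J) (e(a := f))"
    using assms(1) by (intro fun_span_add fun_span_scale fun_span_sum fun_span_generator) auto
  finally show "u \<in> fun_span (insert a J) (e(a := f))" .
qed

lemma bessel_inequality:
  assumes "orthonormal_system J e" "finite J" "continuous_on UNIV f"
  shows "(\<Sum>j\<in>J. (L2_inner f (e j))\<^sup>2) \<le> L2_inner f f"
proof -
  define s where "s x = (\<Sum>j\<in>J. L2_inner f (e j) * e j x)" for x
  define r where "r = orthonormal_residual J e f"
  have cont: "continuous_on UNIV s" "continuous_on UNIV r"
    unfolding s_def r_def using assms
    by (auto intro!: continuous_intros continuous_on_orthonormal_residual intro: orthonormal_system_continuous)
  have r_eq: "r = (\<lambda>x. f x - s x)"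
    unfolding r_def s_def orthonormal_residual_def by simp
  have "L2_inner r s = (\<Sum>j\<in>J. L2_inner f (e j) * L2_inner (e j) r)"
    unfolding s_def[abs_def] using assms cont
    by (subst L2_inner_commute) (auto intro!: L2_inner_sum_left intro: orthonormal_system_continuous)
  also have "\<dots> = 0"
    using L2_inner_orthonormal_residual[OF assms] by (simp add: L2_inner_commute[of "e _"] r_def)
  finally have "L2_inner r s = 0" .
  then have "L2_inner r r = L2_inner f r"
    using L2_inner_diff_left[of f s r] cont assms(3) by (simp add: r_eq[symmetric] L2_inner_commute[of s])
  also have "\<dots> = L2_inner f f - L2_inner s f"
    using L2_inner_diff_left[of f s f] cont assms(3) by (simp add: r_eq[symmetric] L2_inner_commute[of f r])
  also have "L2_inner s f = (\<Sum>j\<in>J. (L2_inner f (e j))\<^sup>2)"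
    unfolding s_def[abs_def] using assms
    by (subst L2_inner_sum_left) (auto simp: L2_inner_commute[of f] power2_eq_square orthonormal_system_continuous)
  finally show ?thesis using L2_inner_self_nonneg[of r] by linarith
qed

lemma sq_le_L2_inner_mul_sum_sq:
  assumes "orthonormal_system J e" "finite J" "g \<in> fun_span J e"
  shows "(g x)\<^sup>2 \<le> L2_inner g g * (\<Sum>j\<in>J. (e j x)\<^sup>2)"
proof -
  obtain c where c: "g = (\<lambda>x. \<Sum>j\<in>J. c j * e j x)" using assms(3) by (rule fun_spanE)
  then have "L2_inner g g = (\<Sum>j\<in>J. (c j)\<^sup>2)"
    using L2_inner_self_orthonormal_comb[OF assms(1,2)] by simp
  then show ?thesis using Cauchy_Schwarz_ineq_sum[of c "\<lambda>j. e j x" J] by (simp add: c)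
qed

text \<open>The reproducing kernel sum_j e_j(x) e_j evaluates every function of the span at x, so
  Bessel's inequality applied to it compares the diagonals of two orthonormal systems.\<close>
lemma sum_sq_le_if_orthonormal_in_span:
  assumes e: "orthonormal_system J e" "finite J"
    and e': "orthonormal_system J' e'" "finite J'" "\<And>j. j \<in> J' \<Longrightarrow> e' j \<in> fun_span J e"
  shows "(\<Sum>j\<in>J'. (e' j x)\<^sup>2) \<le> (\<Sum>j\<in>J. (e j x)\<^sup>2)"
proof -
  define k where "k y = (\<Sum>l\<in>J. e l x * e l y)" for y
  have cont_k: "continuous_on UNIV k"
    unfolding k_def using e by (auto intro!: continuous_intros intro: orthonormal_system_continuous)
  have eval: "L2_inner k (e' j) = e' j x" if j: "j \<in> J'" for j
  proof -
    obtain c where c: "e' j = (\<lambda>y. \<Sum>l\<in>J. c l * e l y)" using e'(3)[OF j] by (rule fun_spanE)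
    have "L2_inner k (e' j) = (\<Sum>l\<in>J. e l x * L2_inner (e' j) (e l))"
      unfolding k_def[abs_def] using e e' j
      by (subst L2_inner_sum_left) (auto simp: L2_inner_commute intro: orthonormal_system_continuous)
    also have "\<dots> = (\<Sum>l\<in>J. e l x * c l)"
      using e by (intro sum.cong) (simp_all add: c L2_inner_orthonormal_comb)
    finally show ?thesis by (simp add: c mult.commute)
  qed
  have "(\<Sum>j\<in>J'. (e' j x)\<^sup>2) = (\<Sum>j\<in>J'. (L2_inner k (e' j))\<^sup>2)"
    by (simp add: eval)
  also have "\<dots> \<le> L2_inner k k" by (rule bessel_inequality[OF e'(1,2) cont_k])
  also have "L2_inner k k = (\<Sum>j\<in>J. (e j x)\<^sup>2)"
    unfolding k_def[abs_def] by (rule L2_inner_self_orthonormal_comb[OF e])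
  finally show ?thesis .
qed

lemma integral_sum_sq_orthonormal:
  assumes "orthonormal_system J e" "finite J"
  shows "(\<integral>x. (\<Sum>j\<in>J. (e j x)\<^sup>2) \<partial>M) = real (card J)"
proof -
  have "(\<integral>x. (\<Sum>j\<in>J. (e j x)\<^sup>2) \<partial>M) = (\<Sum>j\<in>J. L2_inner (e j) (e j))"
    unfolding L2_inner_def power2_eq_square using assms
    by (intro Bochner_Integration.integral_sum) (auto intro!: integrable_continuous continuous_intros intro: orthonormal_system_continuous)
  also have "\<dots> = (\<Sum>j\<in>J. 1)" using assms by (intro sum.cong) (auto simp: orthonormal_system_inner)
  finally show ?thesis by simp
qed

end

subsection \<open>Gram-Schmidt orthonormalisation\<close>

locale full_support_compact_prob_space = compact_prob_space +
  assumes emeasure_open_nonzero: "open U \<Longrightarrow> U \<noteq> {} \<Longrightarrow> emeasure M U \<noteq> 0"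
begin

lemma continuous_zero_if_L2_inner_self_zero:
  assumes "continuous_on UNIV f" "L2_inner f f = 0"
  shows "f x = 0"
proof (rule ccontr)
  assume "f x \<noteq> 0"
  define U where "U = f -` (- {0})"
  have "open U" unfolding U_def by (rule open_vimage[OF open_Compl[OF closed_singleton] assms(1)])
  then have U: "U \<in> sets M" unfolding sets_eq_borel by (rule borel_open)
  have int: "integrable M (\<lambda>y. f y * f y)"
    using assms(1) by (intro integrable_continuous continuous_intros)
  have "(\<integral>y. f y * f y \<partial>M) = 0" using assms(2) unfolding L2_inner_def .
  moreover have "AE y in M. 0 \<le> f y * f y" by simp
  ultimately have ae: "AE y in M. f y * f y = 0" using integral_nonneg_eq_0_iff_AE[OF int] by simp
  have "{y \<in> space M. \<not> f y * f y = 0} = U" unfolding U_def space_eq_UNIV by auto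
  then have "emeasure M U = 0" by (rule iffD1[OF AE_iff_measurable[OF U] ae])
  moreover have "U \<noteq> {}" using \<open>f x \<noteq> 0\<close> unfolding U_def by blast
  ultimately show False using emeasure_open_nonzero[OF \<open>open U\<close>] by blast
qed

lemma orthonormal_system_extend:
  assumes e: "orthonormal_system J e" "finite J" and "a \<notin> J" and f: "continuous_on UNIV f"
  shows "f \<in> fun_span J e \<or>
    (\<exists>e'. orthonormal_system (insert a J) e' \<and> (\<forall>j\<in>J. e' j = e j) \<and>
          f \<in> fun_span (insert a J) e' \<and> e' a \<in> fun_span (insert a J) (e(a := f)))"
proof (cases "L2_inner (orthonormal_residual J e f) (orthonormal_residual J e f) = 0")
  case True
  then have "orthonormal_residual J e f x = 0" for x
    using continuous_zero_if_L2_inner_self_zero[OF continuous_on_orthonormal_residual[OF e(1) f]]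
    by blast
  then have "f = (\<lambda>x. \<Sum>j\<in>J. L2_inner f (e j) * e j x)"
    by (simp add: fun_eq_iff orthonormal_residual_def)
  then show ?thesis by (metis fun_spanI)
next
  case False
  define c where "c = sqrt (L2_inner (orthonormal_residual J e f) (orthonormal_residual J e f))"
  have c: "c > 0" "c * c = L2_inner (orthonormal_residual J e f) (orthonormal_residual J e f)"
    using False L2_inner_self_nonneg unfolding c_def by (auto intro: order.not_eq_order_implies_strict)
  then have "c \<noteq> 0" by simp
  then show ?thesis
    using orthonormal_system_insert_residual[OF e \<open>a \<notin> J\<close> f c]
      fun_span_insert_residual[OF e(2) \<open>a \<notin> J\<close>, where e = e and f = f] \<open>a \<notin> J\<close>
    by (intro disjI2 exI[of _ "e(a := (\<lambda>x. inverse c * orthonormal_residual J e f x))"]) auto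
qed

lemma gram_schmidt:
  assumes "finite I" "\<And>i. i \<in> I \<Longrightarrow> continuous_on UNIV (F i)"
  shows "\<exists>J e. J \<subseteq> I \<and> orthonormal_system J e \<and> (\<forall>j\<in>J. e j \<in> fun_span I F) \<and>
           (\<forall>i\<in>I. F i \<in> fun_span J e)"
  using assms
proof (induction I rule: finite_induct)
  case empty
  show ?case by (rule exI[of _ "{}"]) (auto simp: orthonormal_system_def)
next
  case (insert a I)
  then obtain J e where J: "J \<subseteq> I" "orthonormal_system J e" "\<forall>j\<in>J. e j \<in> fun_span I F"
      "\<forall>i\<in>I. F i \<in> fun_span J e"
    by auto
  have fin: "finite J" "finite (insert a I)" using J(1) insert(1) finite_subset by auto
  have "a \<notin> J" using J(1) insert(2) by auto
  have e_in: "e j \<in> fun_span (insert a I) F" if "j \<in> J" for j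
    using J(3) that fun_span_mono[OF fin(2), of I] by blast
  from orthonormal_system_extend[OF J(2) fin(1) \<open>a \<notin> J\<close> insert(4)[OF insertI1]]
  show ?case
  proof (elim disjE exE conjE)
    assume "F a \<in> fun_span J e"
    then show ?case using J e_in by (intro exI[of _ J] exI[of _ e]) auto
  next
    fix e' assume e': "orthonormal_system (insert a J) e'" "\<forall>j\<in>J. e' j = e j"
      "F a \<in> fun_span (insert a J) e'" "e' a \<in> fun_span (insert a J) (e(a := F a))"
    have "(e(a := F a)) i \<in> fun_span (insert a I) F" if "i \<in> insert a J" for i
      using that e_in fun_span_generator[OF fin(2) insertI1, of F] by auto
    then have "e' a \<in> fun_span (insert a I) F"
      using e'(4) fun_span_subset[of "insert a J" "e(a := F a)"] fin(1) by blast
    moreover have "F i \<in> fun_span (insert a J) e'" if "i \<in> I" for i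
      using J(4) that fun_span_cong[of J e' e] e'(2) fun_span_mono[of "insert a J" J e'] fin by auto
    ultimately show ?case using J(1) e' e_in
      by (intro exI[of _ "insert a J"] exI[of _ e']) auto
  qed
qed

end

subsection \<open>Haar measure on a compact group\<close>

locale compact_haar_group =
  fixes G :: "('g::t2_space, 'b) monoid_scheme" and M :: "'g measure"
  assumes compact_group: "compact_group G" and haar: "haar_probability G M"
begin

sublocale group G
  using compact_group unfolding compact_group_def by simp

lemma in_carrier: "x \<in> carrier G"
  using compact_group unfolding compact_group_def by simp

sublocale compact_prob_space M
  using compact_group haar unfolding compact_group_def haar_probability_def
  by (simp add: compact_prob_space_def compact_prob_space_axioms_def)

lemma left_translation_inverse:
  "inv\<^bsub>G\<^esub> h \<otimes>\<^bsub>G\<^esub> (h \<otimes>\<^bsub>G\<^esub> x) = x" "h \<otimes>\<^bsub>G\<^esub> (inv\<^bsub>G\<^esub> h \<otimes>\<^bsub>G\<^esub> x) = x"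
  by (simp_all add: in_carrier m_assoc[symmetric])

lemma mult_inv_mult_cancel: "(y \<otimes>\<^bsub>G\<^esub> inv\<^bsub>G\<^esub> x) \<otimes>\<^bsub>G\<^esub> x = y"
proof -
  have "(y \<otimes>\<^bsub>G\<^esub> inv\<^bsub>G\<^esub> x) \<otimes>\<^bsub>G\<^esub> x = y \<otimes>\<^bsub>G\<^esub> (inv\<^bsub>G\<^esub> x \<otimes>\<^bsub>G\<^esub> x)"
    by (rule m_assoc[OF in_carrier in_carrier in_carrier])
  then show ?thesis by (simp only: l_inv[OF in_carrier] r_one[OF in_carrier])
qed

lemma continuous_on_left_translation: "continuous_on UNIV (\<lambda>x. h \<otimes>\<^bsub>G\<^esub> x)"
proof -
  have "continuous_on UNIV (\<lambda>p :: 'g \<times> 'g. fst p \<otimes>\<^bsub>G\<^esub> snd p)"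
    using compact_group unfolding compact_group_def by simp
  then have "continuous_on UNIV (\<lambda>x. (\<lambda>p :: 'g \<times> 'g. fst p \<otimes>\<^bsub>G\<^esub> snd p) (h, x))"
    by (rule continuous_on_compose2) (auto intro!: continuous_intros)
  then show ?thesis by simp
qed

lemma measurable_left_translation: "(\<lambda>x. h \<otimes>\<^bsub>G\<^esub> x) \<in> M \<rightarrow>\<^sub>M M"
  using borel_measurable_continuous_onI[OF continuous_on_left_translation]
  by (simp add: measurable_cong_sets[OF sets_eq_borel sets_eq_borel])

lemma vimage_left_translation: "(\<lambda>x. h \<otimes>\<^bsub>G\<^esub> x) -` A = (\<lambda>x. inv\<^bsub>G\<^esub> h \<otimes>\<^bsub>G\<^esub> x) ` A"
  using left_translation_inverse by (auto simp: image_iff) metis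

lemma emeasure_left_translation: "A \<in> sets borel \<Longrightarrow> emeasure M ((\<lambda>x. h \<otimes>\<^bsub>G\<^esub> x) ` A) = emeasure M A"
  using haar unfolding haar_probability_def by blast

lemma distr_left_translation: "distr M M (\<lambda>x. h \<otimes>\<^bsub>G\<^esub> x) = M"
proof (rule measure_eqI)
  fix A assume "A \<in> sets (distr M M (\<lambda>x. h \<otimes>\<^bsub>G\<^esub> x))"
  then have A: "A \<in> sets M" "A \<in> sets borel" using sets_eq_borel by auto
  show "emeasure (distr M M (\<lambda>x. h \<otimes>\<^bsub>G\<^esub> x)) A = emeasure M A"
    using emeasure_distr[OF measurable_left_translation A(1)] emeasure_left_translation[OF A(2)]
    by (simp add: space_eq_UNIV vimage_left_translation)
qed simp

lemma integral_left_translation: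
  fixes f :: "'g \<Rightarrow> real"
  assumes "f \<in> borel_measurable M"
  shows "(\<integral>x. f (h \<otimes>\<^bsub>G\<^esub> x) \<partial>M) = integral\<^sup>L M f"
  using integral_distr[OF measurable_left_translation assms, of h] by (simp add: distr_left_translation)

text \<open>Finitely many left translates of a nonempty open set cover the compact group and all
  have the same measure, so Haar measure has full support.\<close>
sublocale full_support_compact_prob_space M
proof
  fix U :: "'g set" assume U: "open U" "U \<noteq> {}"
  then obtain u where "u \<in> U" by blast
  define V where "V h = (\<lambda>x. h \<otimes>\<^bsub>G\<^esub> x) ` U" for h
  have open_V: "open (V h)" for h
    using open_vimage[OF U(1) continuous_on_left_translation, of "inv\<^bsub>G\<^esub> h"]
    unfolding V_def by (simp only: vimage_left_translation inv_inv[OF in_carrier])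
  have "y \<in> V (y \<otimes>\<^bsub>G\<^esub> inv\<^bsub>G\<^esub> u)" for y
    using \<open>u \<in> U\<close> unfolding V_def by (rule rev_image_eqI) (simp only: mult_inv_mult_cancel)
  then have "UNIV \<subseteq> (\<Union>h\<in>UNIV. V h)" by blast
  then obtain C where C: "C \<subseteq> UNIV" "finite C" "UNIV \<subseteq> (\<Union>h\<in>C. V h)"
    by (rule compactE_image[OF compact_UNIV open_V])
  have V_sets: "V h \<in> sets M" for h using open_V by (simp add: sets_eq_borel)
  then have UN_sets: "(\<Union>h\<in>C. V h) \<in> sets M" using C(2) by (intro sets.finite_UN)
  show "emeasure M U \<noteq> 0"
  proof
    assume U0: "emeasure M U = 0"
    have "1 = emeasure M (space M)" by (simp add: emeasure_space_1)
    also have "\<dots> \<le> emeasure M (\<Union>h\<in>C. V h)"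
      using C(3) by (intro emeasure_mono[OF _ UN_sets]) (simp add: space_eq_UNIV)
    also have "\<dots> \<le> (\<Sum>h\<in>C. emeasure M (V h))"
      using V_sets by (intro emeasure_subadditive_finite[OF C(2)]) blast
    also have "\<dots> = 0"
      by (simp add: V_def emeasure_left_translation[OF borel_open[OF U(1)]] U0)
    finally show False by simp
  qed
qed

lemma orthonormal_system_left_translate:
  assumes "orthonormal_system J e"
  shows "orthonormal_system J (\<lambda>j. e j \<circ> (\<lambda>x. h \<otimes>\<^bsub>G\<^esub> x))"
  unfolding orthonormal_system_def
proof (intro conjI ballI)
  fix j assume "j \<in> J"
  have "continuous_on UNIV (\<lambda>x. e j (h \<otimes>\<^bsub>G\<^esub> x))"
    by (rule continuous_on_compose2[OF orthonormal_system_continuous[OF assms \<open>j \<in> J\<close>]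
          continuous_on_left_translation]) simp
  then show "continuous_on UNIV (e j \<circ> (\<lambda>x. h \<otimes>\<^bsub>G\<^esub> x))" by (simp only: comp_def)
next
  fix j j' assume j: "j \<in> J" "j' \<in> J"
  have "(\<lambda>x. e j x * e j' x) \<in> borel_measurable M"
    by (intro borel_measurable_continuous continuous_on_mult orthonormal_system_continuous[OF assms] j)
  then have "L2_inner (e j \<circ> (\<lambda>x. h \<otimes>\<^bsub>G\<^esub> x)) (e j' \<circ> (\<lambda>x. h \<otimes>\<^bsub>G\<^esub> x)) = L2_inner (e j) (e j')"
    unfolding L2_inner_def comp_def by (rule integral_left_translation)
  then show "L2_inner (e j \<circ> (\<lambda>x. h \<otimes>\<^bsub>G\<^esub> x)) (e j' \<circ> (\<lambda>x. h \<otimes>\<^bsub>G\<^esub> x)) = (if j = j' then 1 else 0)"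
    using orthonormal_system_inner[OF assms j] by simp
qed

text \<open>Translating an orthonormal basis of an invariant space gives another one, so by
  basis independence the diagonal of the kernel is invariant, hence constant.\<close>
lemma sum_sq_orthonormal_eq_card:
  assumes e: "orthonormal_system J e" "finite J"
    and invariant: "\<And>h j. j \<in> J \<Longrightarrow> e j \<circ> (\<lambda>x. h \<otimes>\<^bsub>G\<^esub> x) \<in> fun_span J e"
  shows "(\<Sum>j\<in>J. (e j x)\<^sup>2) = real (card J)"
proof -
  define K where "K y = (\<Sum>j\<in>J. (e j y)\<^sup>2)" for y
  have K_translate_le: "K (h \<otimes>\<^bsub>G\<^esub> y) \<le> K y" for h y
  proof -
    have "(\<Sum>j\<in>J. ((e j \<circ> (\<lambda>x. h \<otimes>\<^bsub>G\<^esub> x)) y)\<^sup>2) \<le> K y"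
      unfolding K_def
      by (rule sum_sq_le_if_orthonormal_in_span[OF e orthonormal_system_left_translate[OF e(1)] e(2)])
        (rule invariant)
    then show ?thesis by (simp only: K_def comp_def)
  qed
  have K_le: "K y \<le> K z" for y z
    using K_translate_le[of "y \<otimes>\<^bsub>G\<^esub> inv\<^bsub>G\<^esub> z" z] by (simp only: mult_inv_mult_cancel)
  have K_const: "K = (\<lambda>_. K x)"
    by (rule ext, rule antisym) (rule K_le)+
  have "real (card J) = integral\<^sup>L M K"
    unfolding K_def[abs_def] by (rule integral_sum_sq_orthonormal[OF e, symmetric])
  also have "\<dots> = K x"
    by (subst K_const) (simp add: prob_space)
  finally show ?thesis by (simp only: K_def)
qed

lemma sq_le_card_mul_L2_inner:
  assumes I: "finite I" "\<And>i. i \<in> I \<Longrightarrow> continuous_on UNIV (F i)"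
    and invariant: "\<And>h i. i \<in> I \<Longrightarrow> F i \<circ> (\<lambda>x. h \<otimes>\<^bsub>G\<^esub> x) \<in> fun_span I F"
    and f: "f \<in> fun_span I F"
  shows "(f x)\<^sup>2 \<le> real (card I) * L2_inner f f"
proof -
  have "\<exists>J e. J \<subseteq> I \<and> orthonormal_system J e \<and> (\<forall>j\<in>J. e j \<in> fun_span I F) \<and>
      (\<forall>i\<in>I. F i \<in> fun_span J e)"
    using I by (rule gram_schmidt)
  then obtain J e where J: "J \<subseteq> I" "orthonormal_system J e" "\<forall>j\<in>J. e j \<in> fun_span I F"
      "\<forall>i\<in>I. F i \<in> fun_span J e"
    by (elim exE conjE) (rule that)
  have "finite J" by (rule finite_subset[OF J(1) I(1)])
  have span_sub: "fun_span I F \<subseteq> fun_span J e" using J(4) by (intro fun_span_subset I(1)) auto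
  have "e j \<circ> (\<lambda>x. h \<otimes>\<^bsub>G\<^esub> x) \<in> fun_span J e" if "j \<in> J" for h j
    using fun_span_comp_closed[OF I(1) invariant J(3)[rule_format, OF that]] span_sub by blast
  then have kernel: "(\<Sum>j\<in>J. (e j x)\<^sup>2) = real (card J)"
    by (rule sum_sq_orthonormal_eq_card[OF J(2) \<open>finite J\<close>])
  have "(f x)\<^sup>2 \<le> L2_inner f f * (\<Sum>j\<in>J. (e j x)\<^sup>2)"
    using f span_sub by (intro sq_le_L2_inner_mul_sum_sq[OF J(2) \<open>finite J\<close>]) blast
  also have "\<dots> \<le> L2_inner f f * real (card I)"
    unfolding kernel using card_mono[OF I(1) J(1)] L2_inner_self_nonneg
    by (intro mult_left_mono) simp_all
  finally show ?thesis by (simp only: mult.commute)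
qed

end

subsection \<open>Polynomials in the coordinates of a vector-valued function\<close>

definition monomial_fun :: "('a \<Rightarrow> 'v::euclidean_space) \<Rightarrow> 'v multiset \<Rightarrow> 'a \<Rightarrow> real" where
  "monomial_fun \<phi> m x = (\<Prod>b\<in>#m. b \<bullet> \<phi> x)"

lemma continuous_on_monomial_fun:
  fixes \<phi> :: "'a::topological_space \<Rightarrow> 'v::euclidean_space"
  assumes "continuous_on UNIV \<phi>"
  shows "continuous_on UNIV (monomial_fun \<phi> m)"
proof (induction m)
  case empty
  show ?case by (simp add: monomial_fun_def)
next
  case (add b m)
  have "monomial_fun \<phi> (add_mset b m) = (\<lambda>x. (b \<bullet> \<phi> x) * monomial_fun \<phi> m x)"
    by (simp add: monomial_fun_def fun_eq_iff)
  moreover have "continuous_on UNIV (\<lambda>x. (b \<bullet> \<phi> x) * monomial_fun \<phi> m x)"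
    using add by (intro continuous_on_mult continuous_on_inner continuous_on_const assms)
  ultimately show ?case by simp
qed

lemma prod_linear_in_monomial_span:
  fixes \<phi> :: "'a \<Rightarrow> 'v::euclidean_space" and L :: "'v \<Rightarrow> 'v \<Rightarrow> real"
  assumes linear: "\<And>b. linear (L b)"
  shows "(\<lambda>x. \<Prod>b\<in>#m. L b (\<phi> x)) \<in> fun_span (multisets_of_size Basis (size m)) (monomial_fun \<phi>)"
proof (induction m)
  case empty
  have "multisets_of_size (Basis :: 'v set) 0 = {{#}}" by (auto simp: multisets_of_size_def)
  moreover have "monomial_fun \<phi> {#} = (\<lambda>x. 1)" by (simp add: monomial_fun_def fun_eq_iff)
  ultimately show ?case using fun_span_generator[of "{{#}}" "{#}" "monomial_fun \<phi>"] by simp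
next
  case (add a m)
  let ?I = "multisets_of_size (Basis :: 'v set) (size m)"
  let ?I' = "multisets_of_size (Basis :: 'v set) (size (add_mset a m))"
  from add obtain c where c: "(\<lambda>x. \<Prod>b\<in>#m. L b (\<phi> x)) = (\<lambda>x. \<Sum>i\<in>?I. c i * monomial_fun \<phi> i x)"
    by (rule fun_spanE)
  have expand: "(\<Prod>b\<in>#add_mset a m. L b (\<phi> x))
      = (\<Sum>b\<in>Basis. \<Sum>i\<in>?I. (L a b * c i) * monomial_fun \<phi> (add_mset b i) x)" for x
  proof -
    have "(\<Prod>b\<in>#add_mset a m. L b (\<phi> x)) = L a (\<phi> x) * (\<Sum>i\<in>?I. c i * monomial_fun \<phi> i x)"
      using fun_cong[OF c, of x] by simp
    also have "\<dots> = (\<Sum>b\<in>Basis. (\<phi> x \<bullet> b) * L a b) * (\<Sum>i\<in>?I. c i * monomial_fun \<phi> i x)"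
      using Linear_Algebra.linear_componentwise[OF linear[of a], of "\<phi> x" 1] by simp
    also have "\<dots> = (\<Sum>b\<in>Basis. \<Sum>i\<in>?I. ((\<phi> x \<bullet> b) * L a b) * (c i * monomial_fun \<phi> i x))"
      by (rule sum_product)
    also have "\<dots> = (\<Sum>b\<in>Basis. \<Sum>i\<in>?I. (L a b * c i) * ((b \<bullet> \<phi> x) * monomial_fun \<phi> i x))"
      by (intro sum.cong refl) (simp add: inner_commute mult_ac)
    finally show ?thesis by (simp add: monomial_fun_def)
  qed
  have "monomial_fun \<phi> (add_mset b i) \<in> fun_span ?I' (monomial_fun \<phi>)" if "b \<in> Basis" "i \<in> ?I" for b i
    using that by (intro fun_span_generator finite_multisets_of_size finite_Basis)
      (auto simp: multisets_of_size_def)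
  then show ?case unfolding expand
    by (intro fun_span_sum fun_span_scale finite_Basis finite_multisets_of_size)
qed

lemma power_linear_in_monomial_span:
  fixes \<phi> :: "'a \<Rightarrow> 'v::euclidean_space"
  assumes "linear l"
  shows "(\<lambda>x. l (\<phi> x) ^ k) \<in> fun_span (multisets_of_size Basis k) (monomial_fun \<phi>)"
  using prod_linear_in_monomial_span[of "\<lambda>_. l" \<phi> "replicate_mset k 0"] assms by simp

lemma continuous_on_orbit:
  assumes "continuous_linear_action G act"
  shows "continuous_on UNIV (\<lambda>g. act g v)"
proof -
  have "continuous_on UNIV (\<lambda>p. act (fst p) (snd p))"
    using assms unfolding continuous_linear_action_def by blast
  then have "continuous_on UNIV (\<lambda>g. (\<lambda>p. act (fst p) (snd p)) (g, v))"
    by (rule continuous_on_compose2) (auto intro!: continuous_intros)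
  then show ?thesis by simp
qed

lemma monomial_fun_orbit_left_translate:
  assumes act: "continuous_linear_action G act" and m: "m \<in> multisets_of_size Basis k"
  shows "monomial_fun (\<lambda>g. act g v) m \<circ> (\<lambda>x. h \<otimes>\<^bsub>G\<^esub> x)
           \<in> fun_span (multisets_of_size Basis k) (monomial_fun (\<lambda>g. act g v))"
proof -
  have act_linear: "linear (act h)" and act_mult: "act (h \<otimes>\<^bsub>G\<^esub> x) = act h \<circ> act x" for x
    using act unfolding continuous_linear_action_def by blast+
  have linear: "linear (\<lambda>w. b \<bullet> act h w)" for b
    using linear_compose[OF act_linear bounded_linear.linear[OF bounded_linear_inner_right]]
    by (simp add: o_def)
  have "monomial_fun (\<lambda>g. act g v) m \<circ> (\<lambda>x. h \<otimes>\<^bsub>G\<^esub> x) = (\<lambda>x. \<Prod>b\<in>#m. b \<bullet> act h (act x v))"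
    by (simp add: fun_eq_iff monomial_fun_def act_mult)
  also have "\<dots> \<in> fun_span (multisets_of_size Basis (size m)) (monomial_fun (\<lambda>g. act g v))"
    by (rule prod_linear_in_monomial_span[where L = "\<lambda>b w. b \<bullet> act h w", OF linear])
  finally show ?thesis using m by (simp add: multisets_of_size_def)
qed

subsection \<open>Comparing the sup norm with the even L^p norms\<close>

lemma power_powr_inverse: "0 \<le> x \<Longrightarrow> 0 < n \<Longrightarrow> (x ^ n) powr (1 / real n) = (x :: real)"
  by (cases "x = 0") (auto simp: powr_realpow[symmetric] powr_powr)

lemma (in prob_space) Lp_even_norm_le_sup_norm:
  fixes f :: "'a \<Rightarrow> real"
  assumes f: "f \<in> borel_measurable M" and bdd: "bdd_above (range (\<lambda>x. \<bar>f x\<bar>))" and "0 < k"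
  shows "Lp_even_norm M k f \<le> sup_norm f"
proof -
  define S where "S = sup_norm f"
  have le_S: "\<bar>f x\<bar> \<le> S" for x
    unfolding S_def sup_norm_def by (rule cSUP_upper[OF UNIV_I bdd])
  then have "0 \<le> S" by (rule order_trans[OF abs_ge_zero])
  have pow_le: "f x ^ (2 * k) \<le> S ^ (2 * k)" for x
    using power_mono[OF le_S[of x] abs_ge_zero, of "2 * k"] by (simp add: power_even_abs)
  have "(\<integral>x. f x ^ (2 * k) \<partial>M) \<le> (\<integral>x. S ^ (2 * k) \<partial>M)"
    using pow_le f by (intro integral_mono integrable_const_bound[where B = "S ^ (2 * k)"]) auto
  also have "\<dots> = S ^ (2 * k)" by (simp add: prob_space)
  finally have "Lp_even_norm M k f \<le> (S ^ (2 * k)) powr (1 / real (2 * k))"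
    unfolding Lp_even_norm_def by (intro powr_mono2) (auto intro: integral_nonneg_AE)
  also have "\<dots> = S" using \<open>0 \<le> S\<close> \<open>0 < k\<close> by (intro power_powr_inverse) auto
  finally show ?thesis by (simp add: S_def)
qed

lemma sup_norm_le_Lp_even_norm:
  fixes f :: "'a \<Rightarrow> real"
  assumes pow_le: "\<And>x. f x ^ (2 * k) \<le> C * (\<integral>x. f x ^ (2 * k) \<partial>M)" and "0 \<le> C" "0 < k"
  shows "sup_norm f \<le> C powr (1 / real (2 * k)) * Lp_even_norm M k f"
  unfolding sup_norm_def Lp_even_norm_def
proof (rule cSUP_least)
  fix x
  have "0 \<le> (\<integral>x. f x ^ (2 * k) \<partial>M)" by (intro integral_nonneg_AE) simp
  have "\<bar>f x\<bar> = (\<bar>f x\<bar> ^ (2 * k)) powr (1 / real (2 * k))"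
    using \<open>0 < k\<close> by (intro power_powr_inverse[symmetric]) auto
  also have "\<dots> \<le> (C * (\<integral>x. f x ^ (2 * k) \<partial>M)) powr (1 / real (2 * k))"
    using pow_le[of x] by (intro powr_mono2) (simp_all add: power_even_abs)
  also have "\<dots> = C powr (1 / real (2 * k)) * (\<integral>x. f x ^ (2 * k) \<partial>M) powr (1 / real (2 * k))"
    by (rule powr_mult)
  finally show "\<bar>f x\<bar> \<le> C powr (1 / real (2 * k)) * (\<integral>x. f x ^ (2 * k) \<partial>M) powr (1 / real (2 * k))" .
qed simp

theorem corollary1p5:
  fixes G :: "('g::t2_space, 'b) monoid_scheme"
    and M :: "'g measure"
    and act :: "'g \<Rightarrow> 'v::euclidean_space \<Rightarrow> 'v"
    and v :: 'v and l :: "'v \<Rightarrow> real" and k :: nat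
  assumes "compact_group G"
    and "haar_probability G M"
    and "continuous_linear_action G act"
    and "linear l"
    and "k > 0"
  shows "Lp_even_norm M k (\<lambda>g. l (act g v)) \<le> sup_norm (\<lambda>g. l (act g v)) \<and>
         sup_norm (\<lambda>g. l (act g v))
           \<le> real ((DIM('v) + k - 1) choose k) powr (1 / real (2 * k))
              * Lp_even_norm M k (\<lambda>g. l (act g v))"
proof -
  interpret compact_haar_group G M by (rule compact_haar_group.intro) fact+
  define f where "f g = l (act g v)" for g
  define I where "I = multisets_of_size (Basis :: 'v set) k"
  have cont_orbit: "continuous_on UNIV (\<lambda>g. act g v)" by (rule continuous_on_orbit[OF assms(3)])
  have "continuous_on UNIV l"
    using assms(4) by (intro linear_continuous_on) (simp add: linear_conv_bounded_linear)
  then have cont_f: "continuous_on UNIV f"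
    unfolding f_def by (rule continuous_on_compose2[OF _ cont_orbit]) simp
  have "(f g ^ k)\<^sup>2 \<le> real (card I) * L2_inner (\<lambda>g. f g ^ k) (\<lambda>g. f g ^ k)" for g
    using power_linear_in_monomial_span[OF assms(4), of "\<lambda>g. act g v" k]
      continuous_on_monomial_fun[OF cont_orbit] monomial_fun_orbit_left_translate[OF assms(3)]
    by (intro sq_le_card_mul_L2_inner) (auto simp: I_def f_def finite_multisets_of_size)
  then have pow_le: "f g ^ (2 * k) \<le> real ((DIM('v) + k - 1) choose k) * (\<integral>g. f g ^ (2 * k) \<partial>M)" for g
    unfolding L2_inner_def I_def
    by (simp add: card_multisets_of_size power_mult mult.commute[of 2] power2_eq_square)
  obtain B where "\<And>g. \<bar>f g\<bar> \<le> B" using bounded_continuous[OF cont_f] by blast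
  then have "bdd_above (range (\<lambda>g. \<bar>f g\<bar>))" by (intro bdd_aboveI) auto
  then show ?thesis
    using Lp_even_norm_le_sup_norm[OF borel_measurable_continuous[OF cont_f] _ assms(5)]
      sup_norm_le_Lp_even_norm[OF pow_le _ assms(5)]
    unfolding f_def by simp
qed

end
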